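(* Let $n\geqslant 1$ and $1\leqslant d\leqslant n-1$ be integers. Then \begin{align*} &\sum_{k=1}^{n-1}q^k\begin{bmatrix}2k\\ k+d\end{bmatrix}\frac{(-q^{k+1};q)_{n-k}}{[k]} =-\sum_{k=1}^{\lfloor(n+1-d)/2\rfloor}(-1)^kq^{3k^2+(3d-5)k-2d+2}\frac{[2d+4k-2]}{[d][n]}\begin{bmatrix}2n\\ n-d-2k+1\end{bmatrix}, \end{align*} and \begin{align*} \sum_{k=1}^{n}q^k\begin{bmatrix}2k\\ k+d\end{bmatrix}\frac{(-q^{k+1};q)_{n-k}^2}{[k]} =\sum_{k=d}^{n-1}q^{\binom{k+1}{2}-\binom{d}{2}}\frac{1}{[d]}\begin{bmatrix}2n+1\\ n-k\end{bmatrix}+\frac{q^{\binom{n+1}{2}-\binom{d}{2}}}{[d]}. \end{align*}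
   Context: Here $q$ is an indeterminate, $[m]=(1-q^m)/(1-q)=1+q+\cdots+q^{m-1}$ is the $q$-integer, and $\lfloor x\rfloor$ is the largest integer $\le x$. For $n\geq 1$, $(x;q)_n=(1-x)(1-xq)\cdots(1-xq^{n-1})$ and $(x;q)_0=1$. The $q$-binomial coefficient is $\begin{bmatrix}n\\ k\end{bmatrix}=\frac{(q;q)_n}{(q;q)_k(q;q)_{n-k}}$ if $0\leqslant k\leqslant n$ and $0$ otherwise. *)

theory Defs
  imports Main
begin

definition qint :: "'a::field \<Rightarrow> nat \<Rightarrow> 'a" where
  "qint q m = (\<Sum>i<m. q ^ i)"

definition qpoch :: "'a::field \<Rightarrow> 'a \<Rightarrow> nat \<Rightarrow> 'a" where
  "qpoch x q n = (\<Prod>i<n. (1 - x * q ^ i))"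

definition qbinom :: "'a::field \<Rightarrow> int \<Rightarrow> int \<Rightarrow> 'a" where
  "qbinom q n k = (if 0 \<le> k \<and> k \<le> n
     then qpoch q q (nat n) / (qpoch q q (nat k) * qpoch q q (nat (n - k))) else 0)"

end

theory Submission
  imports Defs
begin

(* Both identities are proved by induction on n, starting from n = d.  Since
   (-q^(k+1);q)_(n+1-k) = (1 + q^(n+1)) (-q^(k+1);q)_(n-k), each left-hand side satisfies a
   first-order inhomogeneous recurrence in n.  The right-hand sides satisfy the same recurrences
   by creative telescoping: their summands F(n,k) admit certificates G(n,k) with
   F(n+1,k) - c(n) F(n,k) = G(n,k+1) - G(n,k).  Each certificate identity becomes a rational
   identity in q, q^d, q^k, ... once the four q-binomials involved are written as rational
   multiples of one of them.  Genericity of q keeps all q-integers and q-factorials nonzero. *)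

lemma qpoch_Suc: "qpoch x q (Suc n) = qpoch x q n * (1 - x * q ^ n)"
  by (simp add: qpoch_def)

lemma qpoch_neg_power_Suc:
  assumes "k \<le> n"
  shows "qpoch (- (q ^ (k + 1))) q (Suc n - k)
    = qpoch (- (q ^ (k + 1))) q (n - k) * (1 + q ^ (n + 1))"
proof -
  have "Suc n - k = Suc (n - k)" using assms by simp
  moreover have "q ^ (k + 1) * q ^ (n - k) = q ^ (n + 1)"
    using assms by (simp flip: power_add)
  ultimately show ?thesis by (simp add: qpoch_Suc)
qed

lemma sum_qpoch_neg_power_Suc:
  "(\<Sum>k=1..n. g k * qpoch (- (q ^ (k + 1))) q (Suc n - k) ^ r)
    = (1 + q ^ (n + 1)) ^ r * (\<Sum>k=1..n. g k * qpoch (- (q ^ (k + 1))) q (n - k) ^ r)"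
proof -
  have "g k * qpoch (- (q ^ (k + 1))) q (Suc n - k) ^ r
      = (1 + q ^ (n + 1)) ^ r * (g k * qpoch (- (q ^ (k + 1))) q (n - k) ^ r)"
    if "k \<in> {1..n}" for k
  proof -
    from that have "k \<le> n" by simp
    from qpoch_neg_power_Suc[OF this, of q] show ?thesis by (simp add: power_mult_distrib)
  qed
  then show ?thesis
    unfolding sum_distrib_left by (rule sum.cong[OF refl])
qed

lemma qint_double: "qint q (2 * m) = qint q m * (1 + q ^ m)"
proof -
  have "qint q (2 * m) = (\<Sum>i<m. q ^ i) + (\<Sum>i=m..<m + m. q ^ i)"
    unfolding qint_def mult_2 by (simp add: atLeast0LessThan[symmetric] sum.atLeastLessThan_concat)
  also have "(\<Sum>i=m..<m + m. q ^ i) = q ^ m * qint q m"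
    unfolding qint_def
    by (simp add: sum.shift_bounds_nat_ivl[of _ 0 m m, simplified] sum_distrib_left power_add
        atLeast0LessThan mult.commute)
  finally show ?thesis by (simp add: qint_def algebra_simps)
qed

lemma qbinom_eq_0: "K < 0 \<or> N < K \<Longrightarrow> qbinom q N K = 0"
  by (auto simp: qbinom_def)

lemma qbinom_of_nat:
  "k \<le> N \<Longrightarrow>
    qbinom q (int N) (int k) = qpoch q q N / (qpoch q q k * qpoch q q (N - k))"
  by (simp add: qbinom_def nat_diff_distrib)

lemma qbinom_symmetric: "0 \<le> N \<Longrightarrow> qbinom q N (N - K) = qbinom q N K"
  by (auto simp: qbinom_def mult.commute)

lemma sum_creative_telescoping:
  fixes f g h :: "nat \<Rightarrow> 'a::comm_ring"
  assumes "m \<le> Suc n"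
    and "\<And>k. m \<le> k \<Longrightarrow> k \<le> n \<Longrightarrow> f k = c * g k + (h (Suc k) - h k)"
  shows "(\<Sum>k=m..n. f k) = c * (\<Sum>k=m..n. g k) + (h (Suc n) - h m)"
proof -
  have "(\<Sum>k=m..n. f k) = (\<Sum>k=m..n. c * g k + (h (Suc k) - h k))"
    using assms(2) by (intro sum.cong) auto
  also have "\<dots> = c * (\<Sum>k=m..n. g k) + (h (Suc n) - h m)"
    using assms(1) by (simp add: sum.distrib sum_distrib_left sum_Suc_diff)
  finally show ?thesis .
qed

locale q_not_root_of_unity =
  fixes q :: "'a::field"
  assumes power_ne_1: "m > 0 \<Longrightarrow> q ^ m \<noteq> 1"
begin

lemma one_minus_power_ne_0: "m > 0 \<Longrightarrow> 1 - q ^ m \<noteq> 0"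
  using power_ne_1 by simp

lemma qint_eq: "qint q m = (1 - q ^ m) / (1 - q)"
  using power_ne_1[of 1] by (simp add: qint_def sum_gp_strict)

lemma qint_ne_0: "m > 0 \<Longrightarrow> qint q m \<noteq> 0"
  using one_minus_power_ne_0 one_minus_power_ne_0[of 1] by (simp add: qint_eq)

lemma qpoch_ne_0: "qpoch q q m \<noteq> 0"
proof (induction m)
  case (Suc m)
  then show ?case using one_minus_power_ne_0[of "Suc m"] by (simp add: qpoch_Suc)
qed (simp add: qpoch_def)

lemma qbinom_0: "0 \<le> N \<Longrightarrow> qbinom q N 0 = 1"
  using qpoch_ne_0 by (simp add: qbinom_def qpoch_def)

lemma qbinom_self: "0 \<le> N \<Longrightarrow> qbinom q N N = 1"
  using qpoch_ne_0 by (simp add: qbinom_def qpoch_def)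

lemma qbinom_Suc_top:
  assumes "k \<le> N"
  shows "qbinom q (int (Suc N)) (int k)
    = qbinom q (int N) (int k) * (1 - q ^ Suc N) / (1 - q ^ (Suc N - k))"
proof -
  have "Suc N - k = Suc (N - k)" using assms by simp
  then show ?thesis
    using assms qpoch_ne_0 one_minus_power_ne_0[of "Suc (N - k)"]
    by (simp only: qbinom_of_nat le_SucI) (simp add: qpoch_Suc field_simps)
qed

lemma qbinom_pred_bottom:
  assumes "k \<le> N"
  shows "qbinom q (int N) (int k - 1)
    = qbinom q (int N) (int k) * (1 - q ^ k) / (1 - q ^ Suc (N - k))"
proof (cases k)
  case 0
  then show ?thesis by (simp add: qbinom_eq_0)
next
  case (Suc j)
  have "qbinom q (int N) (int k - 1) = qbinom q (int N) (int j)" using Suc by simp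
  also have "\<dots> = qpoch q q N / (qpoch q q j * qpoch q q (Suc (N - k)))"
  proof -
    have "N - j = Suc (N - k)" using assms Suc by simp
    then show ?thesis using assms Suc by (simp add: qbinom_of_nat)
  qed
  also have "\<dots> = qbinom q (int N) (int k) * (1 - q ^ k) / (1 - q ^ Suc (N - k))"
  proof -
    have "qpoch q q k = qpoch q q j * (1 - q ^ k)"
      "qpoch q q (Suc (N - k)) = qpoch q q (N - k) * (1 - q ^ Suc (N - k))"
      using Suc by (simp_all add: qpoch_Suc)
    then show ?thesis
      unfolding qbinom_of_nat[OF assms]
      using qpoch_ne_0 one_minus_power_ne_0[of "Suc (N - k)"] one_minus_power_ne_0[of k] Suc
      by (simp del: power_Suc add: divide_simps)
  qed
  finally show ?thesis .
qed

lemma qbinom_Suc_bottom: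
  assumes "k < N"
  shows "qbinom q (int N) (int (Suc k))
    = qbinom q (int N) (int k) * (1 - q ^ (N - k)) / (1 - q ^ Suc k)"
proof -
  have "qbinom q (int N) (int k)
      = qbinom q (int N) (int (Suc k)) * (1 - q ^ Suc k) / (1 - q ^ (N - k))"
    using assms qbinom_pred_bottom[of "Suc k" N] by (simp add: Suc_diff_Suc)
  then show ?thesis
    using one_minus_power_ne_0[of "Suc k"] one_minus_power_ne_0[of "N - k"] assms
    by (simp add: field_simps)
qed

text \<open>\<open>term1 d n i\<close> is \<open>-[d]\<close> times the summand of the first right-hand side
  with index \<open>k = i + 1\<close>.\<close>

definition term1 :: "nat \<Rightarrow> nat \<Rightarrow> nat \<Rightarrow> 'a" where
  "term1 d n i = (-1) ^ i * q ^ (3 * i\<^sup>2 + i + 3 * d * i + d) * qint q (2 * d + 4 * i + 2)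
     * qbinom q (2 * int n) (int n - int d - 2 * int i - 1) / qint q n"

definition cert1 :: "nat \<Rightarrow> nat \<Rightarrow> nat \<Rightarrow> 'a" where
  "cert1 d n i = (-1) ^ (i + 1) * q ^ (n + 3 * i\<^sup>2 + 3 * d * i - i) * qint q (2 * i + d)
     * (1 + q ^ (n + 1)) * qbinom q (2 * int n) (int n - int d - 2 * int i) / qint q n"

lemma term1_cert1_forms:
  assumes n: "n = d + 2 * i + Suc p"
  defines "W \<equiv> (-1) ^ i * q ^ (3 * i\<^sup>2 + 3 * d * i) * q ^ i * q ^ d"
  shows "term1 d n i = W * qint q (2 * d + 4 * i + 2) * qbinom q (int (2 * n)) (int p) / qint q n"
      (is ?term)
    and "term1 d (Suc n) i = W * qint q (2 * d + 4 * i + 2)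
      * qbinom q (int (Suc (Suc (2 * n)))) (int (Suc p)) / qint q (Suc n)" (is ?term_Suc)
    and "cert1 d n (Suc i) = W * q ^ (n + 4 * i + 2 + 2 * d) * qint q (2 * Suc i + d)
      * (1 + q ^ (n + 1)) * qbinom q (int (2 * n)) (int p - 1) / qint q n" (is ?cert_Suc)
    and "cert1 d n i = - (W * q ^ Suc p * qint q (2 * i + d)
      * (1 + q ^ (n + 1)) * qbinom q (int (2 * n)) (int (Suc p)) / qint q n)" (is ?cert)
proof -
  have exponents: "3 * i\<^sup>2 + i + 3 * d * i + d = (3 * i\<^sup>2 + 3 * d * i) + i + d"
    "n + 3 * (Suc i)\<^sup>2 + 3 * d * Suc i - Suc i
       = (3 * i\<^sup>2 + 3 * d * i) + i + d + (n + 4 * i + 2 + 2 * d)"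
    "n + 3 * i\<^sup>2 + 3 * d * i - i = (3 * i\<^sup>2 + 3 * d * i) + i + d + Suc p"
    using n by (simp_all add: power2_eq_square algebra_simps)
  have arguments:
    "qbinom q (2 * int n) (int n - int d - 2 * int i - 1) = qbinom q (int (2 * n)) (int p)"
    "qbinom q (2 * int (Suc n)) (int (Suc n) - int d - 2 * int i - 1)
       = qbinom q (int (Suc (Suc (2 * n)))) (int (Suc p))"
    "qbinom q (2 * int n) (int n - int d - 2 * int (Suc i)) = qbinom q (int (2 * n)) (int p - 1)"
    "qbinom q (2 * int n) (int n - int d - 2 * int i) = qbinom q (int (2 * n)) (int (Suc p))"
    by (simp_all add: n algebra_simps)
  show ?term ?term_Suc ?cert_Suc ?cert
    unfolding term1_def cert1_def exponents arguments W_def by (simp_all only: power_add) simp_all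
qed

lemma cert1_telescopes_interior:
  assumes n: "n = d + 2 * i + Suc p"
  shows "term1 d (Suc n) i - (1 + q ^ (n + 1)) * term1 d n i = cert1 d n (Suc i) - cert1 d n i"
proof -
  define M where "M = 2 * n"
  define X where "X = qbinom q (int M) (int p)"
  define W where "W = (-1) ^ i * q ^ (3 * i\<^sup>2 + 3 * d * i) * q ^ i * q ^ d"
  note terms = term1_cert1_forms[OF n, folded M_def X_def W_def]
  have p: "p \<le> M" "p < M" "Suc p \<le> M" "Suc p \<le> Suc M" using n by (simp_all add: M_def)
  have gaps: "Suc (M - p) = 2 * d + 4 * i + p + 3" "M - p = 2 * d + 4 * i + p + 2"
    "Suc M - Suc p = 2 * d + 4 * i + p + 2" "Suc (Suc M) - Suc p = 2 * d + 4 * i + p + 3"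
    using n by (simp_all add: M_def)
  have B_cert_Suc: "qbinom q (int M) (int p - 1)
      = X * (1 - q ^ p) / (1 - q ^ (2 * d + 4 * i + p + 3))"
    using qbinom_pred_bottom[OF p(1)] unfolding gaps(1) X_def .
  have B_cert: "qbinom q (int M) (int (Suc p))
      = X * (1 - q ^ (2 * d + 4 * i + p + 2)) / (1 - q ^ Suc p)"
    using qbinom_Suc_bottom[OF p(2)] unfolding gaps(2) X_def .
  have B_mid: "qbinom q (int (Suc M)) (int (Suc p))
      = qbinom q (int M) (int (Suc p)) * (1 - q ^ Suc M) / (1 - q ^ (2 * d + 4 * i + p + 2))"
    using qbinom_Suc_top[OF p(3)] unfolding gaps(3) .
  have B_term_Suc: "qbinom q (int (Suc (Suc M))) (int (Suc p))
      = qbinom q (int (Suc M)) (int (Suc p)) * (1 - q ^ Suc (Suc M))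
        / (1 - q ^ (2 * d + 4 * i + p + 3))"
    using qbinom_Suc_top[OF p(4)] unfolding gaps(4) .
  define Q D I where "Q = q ^ p" and "D = q ^ d" and "I = q ^ i"
  have monomials: "q ^ (2 * d + 4 * i + 2) = q^2 * D^2 * I^4" "q ^ n = q * Q * D * I^2"
    "q ^ Suc n = q^2 * Q * D * I^2" "q ^ (n + 1) = q^2 * Q * D * I^2"
    "q ^ Suc (Suc M) = q^4 * Q^2 * D^2 * I^4" "q ^ Suc M = q^3 * Q^2 * D^2 * I^4"
    "q ^ (2 * d + 4 * i + p + 3) = q^3 * Q * D^2 * I^4"
    "q ^ (2 * d + 4 * i + p + 2) = q^2 * Q * D^2 * I^4"
    "q ^ Suc p = q * Q" "q ^ (n + 4 * i + 2 + 2 * d) = q^3 * Q * D^3 * I^6"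
    "q ^ (2 * Suc i + d) = q^2 * I^2 * D" "q ^ (2 * i + d) = I^2 * D"
    unfolding Q_def D_def I_def M_def n
    by (simp_all add: power_add power_mult_distrib ac_simps flip: power_mult)
      (simp_all add: eval_nat_numeral)
  have "1 - q \<noteq> 0" "1 - q * Q \<noteq> 0" "1 - q^2 * Q * D^2 * I^4 \<noteq> 0"
    "1 - q^3 * Q * D^2 * I^4 \<noteq> 0" "1 - q * Q * D * I^2 \<noteq> 0"
    "1 - q^2 * Q * D * I^2 \<noteq> 0"
    using one_minus_power_ne_0[of 1] one_minus_power_ne_0[of "Suc p", unfolded monomials]
      one_minus_power_ne_0[of "2 * d + 4 * i + p + 2", unfolded monomials]
      one_minus_power_ne_0[of "2 * d + 4 * i + p + 3", unfolded monomials]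
      one_minus_power_ne_0[of n, unfolded monomials]
      one_minus_power_ne_0[of "Suc n", unfolded monomials] n
    by simp_all
  then show ?thesis
    unfolding terms B_term_Suc B_mid B_cert B_cert_Suc qint_eq monomials Q_def[symmetric]
    by (simp add: divide_simps) algebra
qed

lemma cert1_telescopes:
  assumes "1 \<le> d"
  shows "term1 d (Suc n) i - (1 + q ^ (n + 1)) * term1 d n i = cert1 d n (Suc i) - cert1 d n i"
proof -
  consider "n < d + 2 * i" | "n = d + 2 * i" | p where "n = d + 2 * i + Suc p"
    using less_imp_Suc_add[of "d + 2 * i" n] by (cases "n < d + 2 * i"; cases "n = d + 2 * i") auto
  then show ?thesis
  proof cases
    case 1
    then show ?thesis by (simp add: term1_def cert1_def qbinom_eq_0)
  next
    case 2
    \<comment> \<open>the binomial of \<open>term1 d n i\<close> vanishes, so the ratios of the interior case are unavailable\<close>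
    have binomials: "qbinom q (2 * int (Suc n)) (int (Suc n) - int d - 2 * int i - 1) = 1"
      "qbinom q (2 * int n) (int n - int d - 2 * int i - 1) = 0"
      "qbinom q (2 * int n) (int n - int d - 2 * int (Suc i)) = 0"
      "qbinom q (2 * int n) (int n - int d - 2 * int i) = 1"
      using 2 by (simp_all add: qbinom_eq_0 qbinom_0)
    have exponents: "n + 3 * i\<^sup>2 + 3 * d * i - i = 3 * i\<^sup>2 + i + 3 * d * i + d"
      "2 * d + 4 * i + 2 = 2 * Suc n" "2 * i + d = n"
      using 2 by simp_all
    have "qint q (Suc n) \<noteq> 0" "qint q n \<noteq> 0" using 2 assms qint_ne_0 by simp_all
    then show ?thesis
      unfolding term1_def cert1_def binomials exponents qint_double by simp
  next
    case 3
    then show ?thesis by (rule cert1_telescopes_interior)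
  qed
qed

definition term2 :: "nat \<Rightarrow> nat \<Rightarrow> nat \<Rightarrow> 'a" where
  "term2 d n k = q ^ ((Suc k choose 2) - (d choose 2)) * qbinom q (2 * int n + 1) (int n - int k)"

definition cert2 :: "nat \<Rightarrow> nat \<Rightarrow> nat \<Rightarrow> 'a" where
  "cert2 d n k = - (q ^ (n + 1 + (k choose 2) - (d choose 2)) * qint q k
     * qbinom q (2 * int n + 2) (int n + 1 + int k) / qint q (n + 1))"

lemma term2_cert2_forms:
  assumes "d \<le> k" and n: "n = k + a"
  defines "P \<equiv> q ^ ((k choose 2) - (d choose 2))"
  shows "term2 d n k = P * q ^ k * qbinom q (int (2 * n + 1)) (int a)" (is ?term)
    and "term2 d (Suc n) k = P * q ^ k * qbinom q (int (Suc (Suc (2 * n + 1)))) (int (Suc a))"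
      (is ?term_Suc)
    and "cert2 d n (Suc k) = - (P * q ^ (n + 1 + k) * qint q (Suc k)
      * qbinom q (int (Suc (2 * n + 1))) (int a) / qint q (n + 1))" (is ?cert_Suc)
    and "cert2 d n k = - (P * q ^ (n + 1) * qint q k
      * qbinom q (int (Suc (2 * n + 1))) (int (Suc a)) / qint q (n + 1))" (is ?cert)
proof -
  have "(d choose 2) \<le> (k choose 2)" using assms(1) by (rule binomial_right_mono)
  then have exponents: "(Suc k choose 2) - (d choose 2) = ((k choose 2) - (d choose 2)) + k"
    "n + 1 + (Suc k choose 2) - (d choose 2) = ((k choose 2) - (d choose 2)) + (n + 1 + k)"
    "n + 1 + (k choose 2) - (d choose 2) = ((k choose 2) - (d choose 2)) + (n + 1)"
    by (simp_all add: numeral_2_eq_2)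
  have arguments: "qbinom q (2 * int n + 1) (int n - int k) = qbinom q (int (2 * n + 1)) (int a)"
    "qbinom q (2 * int (Suc n) + 1) (int (Suc n) - int k)
       = qbinom q (int (Suc (Suc (2 * n + 1)))) (int (Suc a))"
    "qbinom q (2 * int n + 2) (int n + 1 + int (Suc k)) = qbinom q (int (Suc (2 * n + 1))) (int a)"
    "qbinom q (2 * int n + 2) (int n + 1 + int k)
       = qbinom q (int (Suc (2 * n + 1))) (int (Suc a))"
    using qbinom_symmetric[where N="2 * int n + 2" and K="int a" and q=q]
      qbinom_symmetric[where N="2 * int n + 2" and K="int a + 1" and q=q]
    by (simp_all add: n algebra_simps)
  show ?term ?term_Suc ?cert_Suc ?cert
    unfolding term2_def cert2_def exponents arguments P_def by (simp_all only: power_add)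
qed

lemma cert2_telescopes:
  assumes "d \<le> k" "k \<le> n"
  shows "term2 d (Suc n) k - (1 + q ^ (n + 1))\<^sup>2 * term2 d n k
    = cert2 d n (Suc k) - cert2 d n k"
proof -
  obtain a where n: "n = k + a" using assms(2) le_Suc_ex by blast
  define N where "N = 2 * n + 1"
  define X where "X = qbinom q (int N) (int a)"
  define P where "P = q ^ ((k choose 2) - (d choose 2))"
  note terms = term2_cert2_forms[OF assms(1) n, folded N_def X_def P_def]
  have a: "a \<le> N" "a < Suc N" "Suc a \<le> Suc N" using n by (simp_all add: N_def)
  have gaps: "Suc N - a = a + 2 * k + 2" "Suc (Suc N) - Suc a = a + 2 * k + 2"
    using n by (simp_all add: N_def)
  have B_cert_Suc: "qbinom q (int (Suc N)) (int a)
      = X * (1 - q ^ Suc N) / (1 - q ^ (a + 2 * k + 2))"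
    using qbinom_Suc_top[OF a(1)] unfolding gaps X_def .
  have B_cert: "qbinom q (int (Suc N)) (int (Suc a))
      = qbinom q (int (Suc N)) (int a) * (1 - q ^ (a + 2 * k + 2)) / (1 - q ^ Suc a)"
    using qbinom_Suc_bottom[OF a(2)] unfolding gaps .
  have B_term_Suc: "qbinom q (int (Suc (Suc N))) (int (Suc a))
      = qbinom q (int (Suc N)) (int (Suc a)) * (1 - q ^ Suc (Suc N)) / (1 - q ^ (a + 2 * k + 2))"
    using qbinom_Suc_top[OF a(3)] unfolding gaps .
  have "1 - q \<noteq> 0" "1 - q ^ (a + 2 * k + 2) \<noteq> 0"
    "1 - q ^ Suc a \<noteq> 0" "1 - q ^ (n + 1) \<noteq> 0"
    using one_minus_power_ne_0[of 1] one_minus_power_ne_0[of "a + 2 * k + 2"]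
      one_minus_power_ne_0[of "Suc a"] one_minus_power_ne_0[of "n + 1"] by simp_all
  then show ?thesis
    unfolding terms B_term_Suc B_cert B_cert_Suc qint_eq
    by (simp add: N_def n power_add power_mult_distrib mult_2 divide_simps) algebra
qed

definition lhs1 :: "nat \<Rightarrow> nat \<Rightarrow> 'a" where
  "lhs1 d n = (\<Sum>k=1..n-1. q ^ k * qbinom q (2*int k) (int k + int d)
            * qpoch (- (q ^ (k+1))) q (n - k) / qint q k)"

definition rhs1 :: "nat \<Rightarrow> nat \<Rightarrow> 'a" where
  "rhs1 d n = - (\<Sum>k=1..(n+1-d) div 2. (-1) ^ k
            * q powi (3 * int k ^ 2 + (3 * int d - 5) * int k - 2 * int d + 2)
            * qint q (2*d + 4*k - 2) / (qint q d * qint q n)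
            * qbinom q (2 * int n) (int n - int d - 2 * int k + 1))"

definition lhs2 :: "nat \<Rightarrow> nat \<Rightarrow> 'a" where
  "lhs2 d n = (\<Sum>k=1..n. q ^ k * qbinom q (2*int k) (int k + int d)
            * (qpoch (- (q ^ (k+1))) q (n - k)) ^ 2 / qint q k)"

definition rhs2 :: "nat \<Rightarrow> nat \<Rightarrow> 'a" where
  "rhs2 d n = (\<Sum>k=d..n-1. q powi (int ((k+1) choose 2) - int (d choose 2))
              * (1 / qint q d) * qbinom q (2 * int n + 1) (int n - int k))
           + q powi (int ((n+1) choose 2) - int (d choose 2)) / qint q d"

lemma lhs1_Suc:
  assumes "1 \<le> n"
  shows "lhs1 d (Suc n)
    = (1 + q ^ (n + 1)) * (lhs1 d n + q ^ n * qbinom q (2 * int n) (int n + int d) / qint q n)"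
proof -
  define g where "g k = q ^ k * qbinom q (2 * int k) (int k + int d) / qint q k" for k
  have lhs1_g: "lhs1 d m = (\<Sum>k=1..m-1. g k * qpoch (- (q ^ (k + 1))) q (m - k))" for m
    by (simp add: lhs1_def g_def)
  obtain m where "n = Suc m" using assms by (cases n) auto
  then show ?thesis
    using sum_qpoch_neg_power_Suc[where g=g and n=n and r=1 and q=q]
    unfolding lhs1_g by (simp add: qpoch_def g_def algebra_simps)
qed

lemma lhs2_Suc:
  "lhs2 d (Suc n) = (1 + q ^ (n + 1))\<^sup>2 * lhs2 d n
     + q ^ (n + 1) * qbinom q (2 * int (Suc n)) (int (Suc n) + int d) / qint q (Suc n)"
proof -
  define g where "g k = q ^ k * qbinom q (2 * int k) (int k + int d) / qint q k" for k
  have lhs2_g: "lhs2 d m = (\<Sum>k=1..m. g k * (qpoch (- (q ^ (k + 1))) q (m - k))\<^sup>2)" for m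
    by (simp add: lhs2_def g_def)
  show ?thesis
    using sum_qpoch_neg_power_Suc[where g=g and n=n and r=2 and q=q]
    unfolding lhs2_g by (simp add: qpoch_def g_def)
qed

lemma sum_term1_Suc:
  assumes "1 \<le> d"
  shows "(\<Sum>i\<le>Suc n. term1 d (Suc n) i) = (1 + q ^ (n + 1)) * (\<Sum>i\<le>n. term1 d n i)
     + (1 + q ^ (n + 1)) * q ^ n * qint q d * qbinom q (2 * int n) (int n + int d) / qint q n"
proof -
  have "(\<Sum>i\<le>Suc n. term1 d (Suc n) i) = (\<Sum>i=0..n. term1 d (Suc n) i)"
    by (simp add: atLeast0AtMost term1_def qbinom_eq_0)
  also have "\<dots> = (1 + q ^ (n + 1)) * (\<Sum>i=0..n. term1 d n i)
      + (cert1 d n (Suc n) - cert1 d n 0)"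
    using cert1_telescopes[OF assms]
    by (intro sum_creative_telescoping) (simp_all add: algebra_simps)
  also have "cert1 d n (Suc n) - cert1 d n 0
      = (1 + q ^ (n + 1)) * q ^ n * qint q d * qbinom q (2 * int n) (int n + int d) / qint q n"
    using qbinom_symmetric[where N="2 * int n" and K="int n + int d" and q=q]
    by (simp add: cert1_def qbinom_eq_0 algebra_simps add_divide_distrib diff_divide_distrib)
  finally show ?thesis by (simp add: atLeast0AtMost)
qed

lemma sum_term2_Suc:
  assumes "d \<le> n"
  shows "(\<Sum>k=d..Suc n. term2 d (Suc n) k)
     = (1 + q ^ (n + 1))\<^sup>2 * (\<Sum>k=d..n. term2 d n k)
     + q ^ (n + 1) * qint q d * qbinom q (2 * int n + 2) (int n + 1 + int d) / qint q (n + 1)"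
proof -
  have telescoped: "(\<Sum>k=d..n. term2 d (Suc n) k)
      = (1 + q ^ (n + 1))\<^sup>2 * (\<Sum>k=d..n. term2 d n k) + (cert2 d n (Suc n) - cert2 d n d)"
    using assms cert2_telescopes by (intro sum_creative_telescoping) (simp_all add: algebra_simps)
  have top: "term2 d (Suc n) (Suc n) = - cert2 d n (Suc n)"
  proof -
    have "(d choose 2) \<le> (Suc n choose 2)" using assms by (intro binomial_right_mono) simp
    then have "(Suc (Suc n) choose 2) - (d choose 2) = n + 1 + (Suc n choose 2) - (d choose 2)"
      by (simp add: numeral_2_eq_2)
    moreover have "qbinom q (2 * int (Suc n) + 1) (int (Suc n) - int (Suc n)) = 1"
      "qbinom q (2 * int n + 2) (int n + 1 + int (Suc n)) = 1"
      using qbinom_self[of "2 * int n + 2"] by (simp_all add: qbinom_0 algebra_simps)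
    ultimately show ?thesis using qint_ne_0[of "n + 1"] by (simp add: term2_def cert2_def)
  qed
  have bottom: "- cert2 d n d
      = q ^ (n + 1) * qint q d * qbinom q (2 * int n + 2) (int n + 1 + int d) / qint q (n + 1)"
    by (simp add: cert2_def)
  show ?thesis
    unfolding bottom[symmetric] using assms by (simp add: telescoped top)
qed

lemma lhs1_eq_sum_term1:
  assumes "1 \<le> d" "d \<le> n"
  shows "lhs1 d n = (\<Sum>i\<le>n. term1 d n i) / qint q d"
  using assms(2)
proof (induction n rule: dec_induct)
  case base
  have "lhs1 d d = 0" "(\<Sum>i\<le>d. term1 d d i) = 0"
    by (auto simp: lhs1_def term1_def qbinom_eq_0 intro!: sum.neutral)
  then show ?case by simp
next
  case (step n)
  have "1 \<le> n" using step(1) assms(1) by simp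
  show ?case
    unfolding lhs1_Suc[OF \<open>1 \<le> n\<close>] sum_term1_Suc[OF assms(1)] step.IH
    using assms(1) qint_ne_0[of d] qint_ne_0[of n] by (simp add: field_simps)
qed

lemma lhs2_eq_sum_term2:
  assumes "1 \<le> d" "d \<le> n"
  shows "lhs2 d n = (\<Sum>k=d..n. term2 d n k) / qint q d"
  using assms(2)
proof (induction n rule: dec_induct)
  case base
  obtain c where d: "d = Suc c" using assms(1) by (cases d) auto
  have "qbinom q (2 * int d) (int d + int d) = 1"
    using qbinom_self[of "2 * int d"] by (simp add: algebra_simps)
  then have "lhs2 d d = q ^ d / qint q d"
    by (simp add: lhs2_def d qbinom_eq_0 qpoch_def)
  moreover have "term2 d d d = q ^ d"
    using qbinom_0[of "2 * int d + 1"] by (simp add: term2_def numeral_2_eq_2)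
  ultimately show ?case by simp
next
  case (step n)
  then show ?case
    unfolding lhs2_Suc sum_term2_Suc[OF step(1)] step.IH
    using assms(1) qint_ne_0[of d] qint_ne_0[of "Suc n"] by (simp add: field_simps)
qed

lemma rhs1_eq_sum_term1:
  assumes "1 \<le> d" "d \<le> n"
  shows "rhs1 d n = (\<Sum>i\<le>n. term1 d n i) / qint q d"
proof -
  define K where "K = (n + 1 - d) div 2"
  have summand: "- ((-1) ^ Suc i
      * q powi (3 * int (Suc i) ^ 2 + (3 * int d - 5) * int (Suc i) - 2 * int d + 2)
      * qint q (2 * d + 4 * Suc i - 2) / (qint q d * qint q n)
      * qbinom q (2 * int n) (int n - int d - 2 * int (Suc i) + 1)) = term1 d n i / qint q d" for i
  proof -
    have exponents: "3 * int (Suc i) ^ 2 + (3 * int d - 5) * int (Suc i) - 2 * int d + 2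
        = int (3 * i\<^sup>2 + i + 3 * d * i + d)"
      "2 * d + 4 * Suc i - 2 = 2 * d + 4 * i + 2"
      "int n - int d - 2 * int (Suc i) + 1 = int n - int d - 2 * int i - 1"
      by (simp_all add: algebra_simps power2_eq_square)
    show ?thesis unfolding term1_def exponents power_int_of_nat by (simp add: mult.commute)
  qed
  have "rhs1 d n = (\<Sum>i<K. term1 d n i / qint q d)"
    unfolding rhs1_def One_nat_def sum.atLeast1_atMost_eq sum_negf[symmetric] summand
    by (simp add: K_def)
  also have "\<dots> = (\<Sum>i\<le>n. term1 d n i / qint q d)"
  proof (rule sum.mono_neutral_left)
    show "\<forall>i\<in>{..n} - {..<K}. term1 d n i / qint q d = 0"
      using assms(2) by (auto simp: K_def term1_def qbinom_eq_0)
  qed (auto simp: K_def)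
  finally show ?thesis by (simp add: sum_divide_distrib)
qed

lemma rhs2_eq_sum_term2:
  assumes "1 \<le> d" "d \<le> n"
  shows "rhs2 d n = (\<Sum>k=d..n. term2 d n k) / qint q d"
proof -
  have summand: "q powi (int ((k + 1) choose 2) - int (d choose 2)) * (1 / qint q d)
      * qbinom q (2 * int n + 1) (int n - int k) = term2 d n k / qint q d" if "d \<le> k" for k
  proof -
    have "(d choose 2) \<le> (Suc k choose 2)" using that by (intro binomial_right_mono) simp
    then have exponent: "int ((k + 1) choose 2) - int (d choose 2) = int ((Suc k choose 2) - (d choose 2))"
      by simp
    show ?thesis unfolding term2_def exponent power_int_of_nat by simp
  qed
  obtain m where m: "n = Suc m" using assms by (cases n) auto
  have "(\<Sum>k=d..n-1. q powi (int ((k + 1) choose 2) - int (d choose 2)) * (1 / qint q d)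
      * qbinom q (2 * int n + 1) (int n - int k)) = (\<Sum>k=d..m. term2 d n k / qint q d)"
    using summand by (intro sum.cong) (simp_all add: m)
  moreover have "q powi (int ((n + 1) choose 2) - int (d choose 2)) / qint q d
      = term2 d n n / qint q d"
    using summand[OF assms(2)] qbinom_0[of "2 * int n + 1"] by simp
  ultimately have "rhs2 d n = (\<Sum>k=d..m. term2 d n k / qint q d) + term2 d n n / qint q d"
    unfolding rhs2_def by simp
  also have "\<dots> = (\<Sum>k=d..n. term2 d n k) / qint q d"
    using assms(2) m by (simp add: sum_divide_distrib add_divide_distrib)
  finally show ?thesis .
qed

end

theorem theorem1p4:
  fixes q :: "'a::field" and n d :: nat
  assumes q_generic: "\<forall>m::nat. m > 0 \<longrightarrow> q ^ m \<noteq> 1"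
    and "n \<ge> 1" and "1 \<le> d" and "d \<le> n - 1"
  shows "((\<Sum>k=1..n-1. q ^ k * qbinom q (2*int k) (int k + int d)
            * qpoch (- (q ^ (k+1))) q (n - k) / qint q k)
         = - (\<Sum>k=1..(n+1-d) div 2. (-1) ^ k
            * q powi (3 * int k ^ 2 + (3 * int d - 5) * int k - 2 * int d + 2)
            * qint q (2*d + 4*k - 2) / (qint q d * qint q n)
            * qbinom q (2 * int n) (int n - int d - 2 * int k + 1)))
     \<and> ((\<Sum>k=1..n. q ^ k * qbinom q (2*int k) (int k + int d)
            * (qpoch (- (q ^ (k+1))) q (n - k)) ^ 2 / qint q k)
         = (\<Sum>k=d..n-1. q powi (int ((k+1) choose 2) - int (d choose 2))
              * (1 / qint q d) * qbinom q (2 * int n + 1) (int n - int k))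
           + q powi (int ((n+1) choose 2) - int (d choose 2)) / qint q d)"
proof -
  interpret q_not_root_of_unity q
    using q_generic by unfold_locales blast
  have d: "1 \<le> d" "d \<le> n" using assms by linarith+
  have "lhs1 d n = rhs1 d n"
    using lhs1_eq_sum_term1[OF d] rhs1_eq_sum_term1[OF d] by simp
  moreover have "lhs2 d n = rhs2 d n"
    using lhs2_eq_sum_term2[OF d] rhs2_eq_sum_term2[OF d] by simp
  ultimately show ?thesis
    unfolding lhs1_def rhs1_def lhs2_def rhs2_def by simp
qed

end
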